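(* Let $G=(V,E,\mu,\omega)$ be a weighted graph with a fixed reference vertex $p\in V$, and suppose there exist constants $D>0$ and $0\le\alpha\le2$ such that $\mathrm{Deg}(x)\le D\,d(x,p)^{\alpha}$ for all $x\in V$, $x\ne p$. Let $T\in(0,\infty]$ and let $u\in C^2_t([0,T)\times V)$ satisfy the homogeneous wave equation $\partial_t^2u(t,x)=\Delta u(t,x)$ for all $(t,x)\in[0,T)\times V$ (the time derivative at $t=0$ being one-sided). Suppose that for some $C>0$ and $A_1\in[0,2-\alpha]$, $$|u(t,x)|\le C\,d(x,p)^{A_1 d(x,p)}\quad\text{for all }(t,x)\in[0,T)\times V,\ x\ne p.$$ Then for every $x\in V$, the function $t\mapsto u(t,x)$ is real analytic on $[0,T)$, with radius of analyticity $r$ (i.e. for every $t_0\in[0,T)$ the Taylor series of $u(\cdot,x)$ at $t_0$ converges to $u(t,x)$ for all $t\in[0,T)$ with $|t-t_0|<r$) satisfying $r=+\infty$ if $A_1<2-\alpha$, and $r\ge\frac1e\sqrt{\frac{2}{D}}$ if $A_1=2-\alpha$.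
   Context: A weighted graph $G=(V,E,\mu,\omega)$ consists of a locally finite, connected, simple, undirected graph $(V,E)$, a symmetric edge weight $\omega:E\to(0,\infty)$, $\{x,y\}\mapsto\omega_{xy}=\omega_{yx}$, and a vertex weight $\mu:V\to(0,\infty)$. Write $x\sim y$ if $\{x,y\}\in E$; $d(x,y)$ is the combinatorial graph distance. The Laplacian is $\Delta f(x)=\sum_{y\sim x}\frac{\omega_{xy}}{\mu_x}(f(y)-f(x))$ for $f:V\to\mathbb{R}$, and the weighted degree is $\mathrm{Deg}(x)=\sum_{y\sim x}\frac{\omega_{xy}}{\mu_x}$. For an interval $I$ and $k\in\mathbb{N}_0\cup\{\infty\}$, $u\in C^k_t(I\times V)$ means $u:I\times V\to\mathbb{R}$ and $u(\cdot,x)\in C^k(I)$ for every $x\in V$; $\Delta$ acts in the space variable. *)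

theory Defs
  imports "HOL-Analysis.Analysis"
begin

text \<open>A weighted graph on the vertex type 'v (V = UNIV): adjacency relation adj,
 edge weight w (only its values on edges matter), vertex weight mu.\<close>
definition weighted_graph :: "('v \<Rightarrow> 'v \<Rightarrow> bool) \<Rightarrow> ('v \<Rightarrow> 'v \<Rightarrow> real) \<Rightarrow> ('v \<Rightarrow> real) \<Rightarrow> bool" where
  "weighted_graph adj w mu \<longleftrightarrow>
     (\<forall>x y. adj x y \<longrightarrow> adj y x) \<and>
     (\<forall>x. \<not> adj x x) \<and>
     (\<forall>x. finite {y. adj x y}) \<and>
     (\<forall>x y. adj\<^sup>*\<^sup>* x y) \<and>
     (\<forall>x y. adj x y \<longrightarrow> w x y = w y x \<and> w x y > 0) \<and>
     (\<forall>x. mu x > 0)"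

definition gdist :: "('v \<Rightarrow> 'v \<Rightarrow> bool) \<Rightarrow> 'v \<Rightarrow> 'v \<Rightarrow> nat" where
  "gdist adj x y = (LEAST n. (adj ^^ n) x y)"

definition laplacian :: "('v \<Rightarrow> 'v \<Rightarrow> bool) \<Rightarrow> ('v \<Rightarrow> 'v \<Rightarrow> real) \<Rightarrow> ('v \<Rightarrow> real) \<Rightarrow> ('v \<Rightarrow> real) \<Rightarrow> 'v \<Rightarrow> real" where
  "laplacian adj w mu f x = (\<Sum>y\<in>{y. adj x y}. w x y / mu x * (f y - f x))"

definition wdeg :: "('v \<Rightarrow> 'v \<Rightarrow> bool) \<Rightarrow> ('v \<Rightarrow> 'v \<Rightarrow> real) \<Rightarrow> ('v \<Rightarrow> real) \<Rightarrow> 'v \<Rightarrow> real" where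
  "wdeg adj w mu x = (\<Sum>y\<in>{y. adj x y}. w x y / mu x)"

definition tint :: "ereal \<Rightarrow> real set" where
  "tint T = {t. 0 \<le> t \<and> ereal t < T}"

end

theory Submission
  imports Defs "HOL-Real_Asymp.Real_Asymp"
begin

text \<open>Since the Laplacian acts by finite sums it commutes with \<open>\<partial>\<^sub>t\<close>, so the wave equation
gives \<open>\<partial>\<^sub>t\<^sup>2\<^sup>k u = \<Delta>\<^sup>k u\<close>. One application of \<open>\<Delta>\<close> at distance \<open>m\<close> from \<open>p\<close> costs at most a
factor \<open>2 Deg \<le> 2D m\<^sup>\<alpha>\<close> and only looks at distances \<open>m \<plusminus> 1\<close>, so induction on \<open>k\<close> gives
\<open>|\<Delta>\<^sup>k u(t,y)| \<le> K (2D)\<^sup>k (m+k+c)\<^bsup>\<alpha>k + A\<^sub>1(m+k+c)\<^esup>\<close> uniformly for \<open>t\<close> in a compact interval.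
Taylor's formula with a remainder of even order \<open>2k\<close> bounds the error of the Taylor polynomial
by this times \<open>|t - t\<^sub>0|\<^sup>2\<^sup>k/(2k-1)!\<close>, so no growth bound on \<open>\<partial>\<^sub>t u\<close> is ever needed; with \<open>(2k)! \<ge> (2k/e)\<^sup>2\<^sup>k\<close> the error behaves like
\<open>k\<^bsup>-(2-\<alpha>-A\<^sub>1)k\<^esup> (D e\<^sup>2|t - t\<^sub>0|\<^sup>2/2)\<^sup>k\<close> up to polynomial factors, which tends to zero if
\<open>A\<^sub>1 < 2 - \<alpha>\<close>, and if \<open>A\<^sub>1 = 2 - \<alpha>\<close> as long as \<open>|t - t\<^sub>0| < e\<^sup>-\<^sup>1 sqrt (2/D)\<close>.\<close>

lemma weighted_graphD:
  assumes "weighted_graph adj w mu"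
  shows "\<forall>x y. adj x y \<longrightarrow> adj y x" "\<forall>x y. adj\<^sup>*\<^sup>* x y" "\<And>x. finite {y. adj x y}"
    "\<And>x y. adj x y \<Longrightarrow> w x y > 0" "\<And>x. mu x > 0"
  using assms unfolding weighted_graph_def by auto

lemma relpowp_gdist:
  assumes "adj\<^sup>*\<^sup>* x y"
  shows "(adj ^^ gdist adj x y) x y"
  unfolding gdist_def using rtranclp_imp_relpowp[OF assms] by (rule LeastI_ex)

lemma gdist_le: "(adj ^^ n) x y \<Longrightarrow> gdist adj x y \<le> n"
  unfolding gdist_def by (rule Least_le)

lemma gdist_adj_le:
  assumes "\<forall>x y. adj x y \<longrightarrow> adj y x" "\<forall>x y. adj\<^sup>*\<^sup>* x y" "adj y z"
  shows "gdist adj z p \<le> Suc (gdist adj y p)"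
proof -
  have "(adj ^^ gdist adj y p) y p" by (rule relpowp_gdist[OF assms(2)[rule_format]])
  moreover have "adj z y" by (rule assms(1)[rule_format, OF assms(3)])
  ultimately have "(adj ^^ Suc (gdist adj y p)) z p" by (rule relpowp_Suc_I2[rotated])
  then show ?thesis by (rule gdist_le)
qed

lemma gdist_eq_0_iff:
  assumes "\<forall>x y. adj\<^sup>*\<^sup>* x y"
  shows "gdist adj x p = 0 \<longleftrightarrow> x = p"
proof
  assume "gdist adj x p = 0"
  then have "(adj ^^ 0) x p" using relpowp_gdist[of adj x p] assms by simp
  then show "x = p" by simp
next
  assume "x = p"
  then show "gdist adj x p = 0" using gdist_le[of 0 adj p p] by simp
qed

lemma wdeg_nonneg: "weighted_graph adj w mu \<Longrightarrow> wdeg adj w mu y \<ge> 0"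
  unfolding wdeg_def using weighted_graphD[of adj w mu]
  by (intro sum_nonneg) (simp add: less_imp_le)

lemma abs_laplacian_le:
  assumes G: "weighted_graph adj w mu"
    and nb: "\<And>z. adj y z \<Longrightarrow> 2 * wdeg adj w mu y * \<bar>g z\<bar> \<le> R"
    and self: "2 * wdeg adj w mu y * \<bar>g y\<bar> \<le> R" and R: "R \<ge> 0"
  shows "\<bar>laplacian adj w mu g y\<bar> \<le> R"
proof -
  note f = weighted_graphD[OF G]
  define W where "W = wdeg adj w mu y"
  have a0: "\<And>z. adj y z \<Longrightarrow> w y z / mu y > 0" using f by auto
  show ?thesis
  proof (cases "W = 0")
    case True
    have "\<forall>z\<in>{z. adj y z}. w y z / mu y = 0"
      using True f(3)[of y] a0 unfolding W_def wdeg_def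
      by (subst sum_nonneg_eq_0_iff[symmetric]) (auto simp: less_imp_le)
    then have "{z. adj y z} = {}" using a0 by fastforce
    then show ?thesis using R by (simp add: laplacian_def)
  next
    case False
    then have Wp: "W > 0" using wdeg_nonneg[OF G] by (simp add: W_def order_less_le)
    define \<beta> where "\<beta> = R / (2 * W)"
    have bz: "\<bar>g z\<bar> \<le> \<beta>" if "adj y z \<or> z = y" for z
      using that nb self Wp unfolding \<beta>_def W_def by (auto simp: field_simps mult.commute)
    have "\<bar>laplacian adj w mu g y\<bar> \<le> (\<Sum>z\<in>{z. adj y z}. \<bar>w y z / mu y * (g z - g y)\<bar>)"
      unfolding laplacian_def by (rule sum_abs)
    also have "\<dots> \<le> (\<Sum>z\<in>{z. adj y z}. w y z / mu y * (2 * \<beta>))"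
    proof (rule sum_mono)
      fix z assume z: "z \<in> {z. adj y z}"
      then have "\<bar>g z - g y\<bar> \<le> 2 * \<beta>" using bz[of z] bz[of y] by auto
      moreover have pos: "w y z / mu y > 0" using a0 z by simp
      ultimately show "\<bar>w y z / mu y * (g z - g y)\<bar> \<le> w y z / mu y * (2 * \<beta>)"
        by (simp only: abs_mult abs_of_pos[OF pos] mult_left_mono less_imp_le)
    qed
    also have "\<dots> = 2 * \<beta> * W" unfolding W_def wdeg_def by (simp add: sum_distrib_left mult.commute)
    also have "\<dots> = R" using Wp by (simp add: \<beta>_def)
    finally show ?thesis .
  qed
qed

lemma has_real_derivative_laplacian_power:
  assumes "\<And>y. ((\<lambda>s. F s y) has_real_derivative F' y) (at t within S)"
  shows "((\<lambda>s. (laplacian adj w mu ^^ k) (F s) x) has_real_derivative (laplacian adj w mu ^^ k) F' x)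
           (at t within S)"
proof (induction k arbitrary: x)
  case 0
  then show ?case using assms by simp
next
  case (Suc k)
  then show ?case
    unfolding funpow.simps comp_def laplacian_def by (intro DERIV_sum DERIV_cmult DERIV_diff)
qed

text \<open>The \<open>n\<close>-th time derivative of a solution of \<open>u'' = Lp u\<close> at the vertex \<open>x\<close>.\<close>

definition wave_deriv ::
    "(('v \<Rightarrow> real) \<Rightarrow> 'v \<Rightarrow> real) \<Rightarrow> (real \<Rightarrow> 'v \<Rightarrow> real) \<Rightarrow> (real \<Rightarrow> 'v \<Rightarrow> real) \<Rightarrow> 'v \<Rightarrow> nat \<Rightarrow> real \<Rightarrow> real"
  where "wave_deriv Lp u u' x n t = (Lp ^^ (n div 2)) (if even n then u t else u' t) x"

lemma wave_deriv_has_real_derivative: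
  assumes d1: "\<And>x t. t \<in> S \<Longrightarrow> ((\<lambda>s. u s x) has_real_derivative u' t x) (at t within S)"
    and d2: "\<And>x t. t \<in> S \<Longrightarrow> ((\<lambda>s. u' s x) has_real_derivative u'' t x) (at t within S)"
    and wave: "\<And>x t. t \<in> S \<Longrightarrow> u'' t x = laplacian adj w mu (u t) x"
    and t: "t \<in> S"
  shows "(wave_deriv (laplacian adj w mu) u u' x n has_real_derivative
            wave_deriv (laplacian adj w mu) u u' x (Suc n) t) (at t within S)"
proof (cases "even n")
  case True
  then show ?thesis
    unfolding wave_deriv_def by (simp add: has_real_derivative_laplacian_power d1[OF t])
next
  case False
  have "u'' t = laplacian adj w mu (u t)" using wave[OF t] by (simp add: fun_eq_iff)
  then have "wave_deriv (laplacian adj w mu) u u' x (Suc n) t = (laplacian adj w mu ^^ (n div 2)) (u'' t) x"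
    using False by (simp add: wave_deriv_def funpow_swap1)
  then show ?thesis
    using False unfolding wave_deriv_def by (simp add: has_real_derivative_laplacian_power d2[OF t])
qed

subsection \<open>Growth of iterated Laplacians\<close>

text \<open>The factor \<open>\<theta>\<close> at \<open>m = 0\<close> absorbs the
degree of \<open>p\<close> itself, which the hypothesis does not control; the shift \<open>c \<ge> 1\<close> keeps the base
of the power at least \<open>1\<close>.\<close>

definition lap_bound :: "real \<Rightarrow> real \<Rightarrow> real \<Rightarrow> real \<Rightarrow> real \<Rightarrow> real \<Rightarrow> nat \<Rightarrow> nat \<Rightarrow> real" where
  "lap_bound K D \<theta> c \<alpha> A k m = K * (2*D)^k * (if m = 0 then \<theta> else 1) *
      (real m + real k + c) powr (\<alpha> * real k + A * (real m + real k + c))"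

lemma lap_bound_nonneg: "K \<ge> 0 \<Longrightarrow> D > 0 \<Longrightarrow> \<theta> \<ge> 1 \<Longrightarrow> lap_bound K D \<theta> c \<alpha> A k m \<ge> 0"
  unfolding lap_bound_def by (intro mult_nonneg_nonneg) auto

lemma mult_le_powr_add:
  fixes x n e \<alpha> A c \<theta> :: real
  assumes "1 \<le> c" "c \<le> x" "x \<le> n" "0 \<le> e" "0 \<le> \<alpha>" "0 \<le> A" "\<theta> \<le> c powr (\<alpha> + A)" "\<alpha> + A \<le> d"
  shows "\<theta> * x powr e \<le> n powr (e + d)"
proof -
  have "c powr (\<alpha> + A) \<le> n powr (\<alpha> + A)" using assms by (intro powr_mono2) auto
  also have "\<dots> \<le> n powr d" using assms by (intro powr_mono) auto
  finally have "\<theta> \<le> n powr d" using assms(7) by linarith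
  moreover have "x powr e \<le> n powr e" using assms by (intro powr_mono2) auto
  ultimately have "\<theta> * x powr e \<le> n powr d * n powr e"
    by (cases "\<theta> \<ge> 0") (auto intro: mult_mono order_trans[OF mult_nonpos_nonneg])
  then show ?thesis by (simp add: powr_add mult.commute)
qed

lemma lap_bound_step:
  assumes D: "D > 0" and c: "c \<ge> 1" and \<theta>: "\<theta> \<ge> 1" "\<theta> \<le> c powr (\<alpha> + A)"
    and \<alpha>: "\<alpha> \<ge> 0" and A: "A \<ge> 0" and K: "K \<ge> 0" and W: "W \<ge> 0"
    and m': "m' \<le> Suc m" "m \<le> Suc m'"
    and Wm: "W \<le> D * (if m = 0 then \<theta> else real m powr \<alpha>)"
  shows "2 * W * lap_bound K D \<theta> c \<alpha> A k m' \<le> lap_bound K D \<theta> c \<alpha> A (Suc k) m"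
proof -
  define n where "n = real m + real (Suc k) + c"
  define n' where "n' = real m' + real k + c"
  define E where "E = \<alpha> * real (Suc k) + A * n"
  define e' where "e' = \<alpha> * real k + A * n'"
  have n: "n \<ge> 1" "n' \<ge> 1" "n' \<le> n" using c m' by (auto simp: n_def n'_def)
  have e': "e' \<ge> 0" using \<alpha> A n by (simp add: e'_def)
  have mono: "W * X \<le> D * Y" if "W \<le> D" "0 \<le> X" "X \<le> Y" for D X Y :: real
    using that W by (meson mult_mono order_trans)
  have Q: "W * ((if m' = 0 then \<theta> else 1) * n' powr e') \<le> D * ((if m = 0 then \<theta> else 1) * n powr E)"
  proof (cases "m' = 0")
    case True
    then have nn: "n = n' + (if m = 0 then 1 else 2)" using m' by (auto simp: n_def n'_def)
    have "\<theta> * n' powr e' \<le> n powr (e' + (\<alpha> + (if m = 0 then 1 else 2) * A))"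
      using nn c \<alpha> A \<theta> e' by (intro mult_le_powr_add[where c=c and \<alpha>=\<alpha> and A=A]) (auto simp: n'_def)
    also have "e' + (\<alpha> + (if m = 0 then 1 else 2) * A) = E"
      using nn by (simp add: E_def e'_def algebra_simps)
    finally have "\<theta> * n' powr e' \<le> n powr E" .
    moreover have "W \<le> D * (if m = 0 then \<theta> else 1)"
    proof -
      have "m = 0 \<or> m = 1" using m' True by auto
      then show ?thesis using Wm by auto
    qed
    ultimately have "W * (\<theta> * n' powr e') \<le> (D * (if m = 0 then \<theta> else 1)) * n powr E"
      using \<theta> by (intro mono) auto
    then show ?thesis using True by (simp add: mult_ac)
  next
    case False
    have "A * n' \<le> A * n" using n A by (intro mult_left_mono) auto
    then have pe: "n' powr e' \<le> n powr (E - \<alpha>)"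
      using n e' by (intro order_trans[OF powr_mono2 powr_mono]) (auto simp: E_def e'_def algebra_simps)
    show ?thesis
    proof (cases "m = 0")
      case True
      have "n powr (E - \<alpha>) \<le> n powr E" using n \<alpha> by (intro powr_mono) auto
      then have "W * n' powr e' \<le> (D * \<theta>) * n powr E"
        using pe Wm True by (intro mono) auto
      then show ?thesis using True False by (simp add: mult_ac)
    next
      case m0: False
      have "real m powr \<alpha> \<le> n powr \<alpha>" using \<alpha> c by (intro powr_mono2) (auto simp: n_def)
      then have "W \<le> D * n powr \<alpha>" using Wm m0 D by (auto intro: order_trans mult_left_mono)
      then have "W * n' powr e' \<le> (D * n powr \<alpha>) * n powr (E - \<alpha>)"
        using pe by (intro mono) auto
      also have "\<dots> = D * n powr E" using n by (simp add: mult.assoc powr_add[symmetric])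
      finally show ?thesis using False m0 by simp
    qed
  qed
  have "2 * W * lap_bound K D \<theta> c \<alpha> A k m'
      = (K * (2*D)^k * 2) * (W * ((if m' = 0 then \<theta> else 1) * n' powr e'))"
    unfolding lap_bound_def n'_def e'_def by (simp only: mult_ac)
  also have "\<dots> \<le> (K * (2*D)^k * 2) * (D * ((if m = 0 then \<theta> else 1) * n powr E))"
    using Q K D by (intro mult_left_mono) auto
  also have "\<dots> = lap_bound K D \<theta> c \<alpha> A (Suc k) m"
    unfolding lap_bound_def n_def E_def by (simp add: mult_ac)
  finally show ?thesis .
qed

lemma abs_laplacian_power_le_lap_bound:
  assumes G: "weighted_graph adj w mu"
    and D: "D > 0" and c: "c \<ge> 1" and \<theta>: "\<theta> \<ge> 1" "\<theta> \<le> c powr (\<alpha> + A)"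
    and \<alpha>: "\<alpha> \<ge> 0" and A: "A \<ge> 0" and K: "K \<ge> 0"
    and deg_p: "wdeg adj w mu p \<le> D * \<theta>"
    and deg: "\<And>y. y \<noteq> p \<Longrightarrow> wdeg adj w mu y \<le> D * real (gdist adj y p) powr \<alpha>"
    and f: "\<And>y. \<bar>f y\<bar> \<le> lap_bound K D \<theta> c \<alpha> A 0 (gdist adj y p)"
  shows "\<bar>(laplacian adj w mu ^^ k) f y\<bar> \<le> lap_bound K D \<theta> c \<alpha> A k (gdist adj y p)"
proof (induction k arbitrary: y)
  case 0
  then show ?case using f by simp
next
  case (Suc k)
  note G' = weighted_graphD[OF G]
  define m where "m = gdist adj y p"
  define W where "W = wdeg adj w mu y"
  have Wm: "W \<le> D * (if m = 0 then \<theta> else real m powr \<alpha>)"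
    using deg_p deg[of y] gdist_eq_0_iff[OF G'(2), of y p] by (auto simp: W_def m_def)
  have step: "2 * W * \<bar>(laplacian adj w mu ^^ k) f z\<bar> \<le> lap_bound K D \<theta> c \<alpha> A (Suc k) m"
    if "gdist adj z p \<le> Suc m" "m \<le> Suc (gdist adj z p)" for z
  proof -
    have W: "W \<ge> 0" using wdeg_nonneg[OF G] by (simp add: W_def)
    then have "2 * W * \<bar>(laplacian adj w mu ^^ k) f z\<bar> \<le> 2 * W * lap_bound K D \<theta> c \<alpha> A k (gdist adj z p)"
      using Suc.IH[of z] by (simp add: mult_left_mono)
    also have "\<dots> \<le> lap_bound K D \<theta> c \<alpha> A (Suc k) m"
      by (rule lap_bound_step[OF D c \<theta> \<alpha> A K W that Wm])
    finally show ?thesis .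
  qed
  have "\<bar>laplacian adj w mu ((laplacian adj w mu ^^ k) f) y\<bar> \<le> lap_bound K D \<theta> c \<alpha> A (Suc k) m"
  proof (rule abs_laplacian_le[OF G])
    fix z assume "adj y z"
    then show "2 * wdeg adj w mu y * \<bar>(laplacian adj w mu ^^ k) f z\<bar> \<le> lap_bound K D \<theta> c \<alpha> A (Suc k) m"
      using step gdist_adj_le[OF G'(1,2), of y z p] gdist_adj_le[OF G'(1,2), of z y p] G'(1)
      by (auto simp: m_def W_def)
  qed (use step[of y] lap_bound_nonneg[OF K D \<theta>(1)] in \<open>auto simp: W_def m_def\<close>)
  then show ?case by (simp add: m_def)
qed

lemma abs_le_lap_bound_0:
  assumes c: "c \<ge> 1" and \<theta>: "\<theta> \<ge> 1" and A: "A \<ge> 0" and K: "K \<ge> 0"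
    and z0: "m = 0 \<Longrightarrow> \<bar>z\<bar> \<le> K"
    and z: "m \<noteq> 0 \<Longrightarrow> \<bar>z\<bar> \<le> K * real m powr (A * real m)"
  shows "\<bar>z\<bar> \<le> lap_bound K D \<theta> c \<alpha> A 0 m"
proof (cases "m = 0")
  case True
  have "1 \<le> c powr (A * c)" using c A by (intro ge_one_powr_ge_zero) auto
  then have "K \<le> K * \<theta> * c powr (A * c)"
    using K \<theta> by (metis mult.right_neutral mult_left_mono mult_mono zero_le_one order_trans)
  then show ?thesis using z0 True by (simp add: lap_bound_def)
next
  case False
  have "real m powr (A * real m) \<le> (real m + c) powr (A * real m)"
    using False c A by (intro powr_mono2) auto
  also have "\<dots> \<le> (real m + c) powr (A * (real m + c))"
    using False c A by (intro powr_mono mult_left_mono) auto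
  finally have "K * real m powr (A * real m) \<le> K * (real m + c) powr (A * (real m + c))"
    using K by (rule mult_left_mono)
  then show ?thesis using z False by (simp add: lap_bound_def)
qed

lemma abs_laplacian_power_le_lap_bound_of_growth:
  assumes G: "weighted_graph adj w mu"
    and D: "D > 0" "D \<le> D'" and c: "c \<ge> 1" and \<theta>: "\<theta> \<ge> 1" "\<theta> \<le> c powr (\<alpha> + A)"
    and \<alpha>: "\<alpha> \<ge> 0" and A: "A \<ge> 0"
    and deg_p: "wdeg adj w mu p \<le> D' * \<theta>"
    and deg: "\<And>y. y \<noteq> p \<Longrightarrow> wdeg adj w mu y \<le> D * real (gdist adj y p) powr \<alpha>"
    and K: "\<bar>f p\<bar> \<le> K" "C \<le> K"
    and growth: "\<And>y. y \<noteq> p \<Longrightarrow> \<bar>f y\<bar> \<le> C * real (gdist adj y p) powr (A * real (gdist adj y p))"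
  shows "\<bar>(laplacian adj w mu ^^ k) f y\<bar> \<le> lap_bound K D' \<theta> c \<alpha> A k (gdist adj y p)"
proof (rule abs_laplacian_power_le_lap_bound[OF G _ c \<theta> \<alpha> A _ deg_p])
  have K0: "K \<ge> 0" using K(1) by linarith
  then show "K \<ge> 0" "D' > 0" using D by auto
  show "wdeg adj w mu y \<le> D' * real (gdist adj y p) powr \<alpha>" if "y \<noteq> p" for y
    using deg[OF that] D(2) by (meson mult_right_mono order_trans powr_ge_zero)
  show "\<bar>f y\<bar> \<le> lap_bound K D' \<theta> c \<alpha> A 0 (gdist adj y p)" for y
  proof (rule abs_le_lap_bound_0[OF c \<theta>(1) A K0])
    have "gdist adj y p = 0 \<longleftrightarrow> y = p"
      using G by (intro gdist_eq_0_iff) (simp add: weighted_graph_def)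
    then show "gdist adj y p = 0 \<Longrightarrow> \<bar>f y\<bar> \<le> K"
      and "gdist adj y p \<noteq> 0 \<Longrightarrow> \<bar>f y\<bar> \<le> K * real (gdist adj y p) powr (A * real (gdist adj y p))"
      using K growth[of y] by (auto intro: order_trans mult_right_mono)
  qed
qed

subsection \<open>Decay of the Taylor remainder\<close>

lemma exp_ge_power_div_fact: "0 \<le> x \<Longrightarrow> x ^ n / fact n \<le> exp (x::real)"
proof -
  assume x: "0 \<le> x"
  have s: "(\<lambda>n. x ^ n / fact n) sums exp x" using exp_converges[of x] by (simp add: divide_inverse_commute)
  have "sum (\<lambda>n. x ^ n / fact n) {n} \<le> suminf (\<lambda>n. x ^ n / fact n)"
    by (rule sum_le_suminf) (use s x in \<open>auto simp: sums_iff\<close>)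
  then show ?thesis using s by (simp add: sums_iff)
qed

lemma fact_ge_power_div_exp: "real n ^ n / exp (real n) \<le> fact n"
  using exp_ge_power_div_fact[of "real n" n] by (simp add: field_simps)

lemma powr_affine_exponent_split:
  assumes x: "x > 0"
  shows "x powr (\<alpha> * real k + A * (real k + \<nu>)) =
         x powr (A * \<nu>) * x ^ (2*k) * (x powr (-(2 - \<alpha> - A))) ^ k"
proof -
  have "x powr (A * \<nu>) * x ^ (2*k) * (x powr (-(2 - \<alpha> - A))) ^ k =
        x powr (A * \<nu> + real (2*k) + real k * (-(2 - \<alpha> - A)))"
    using x by (simp add: powr_power powr_powr powr_realpow[symmetric] powr_add mult.commute)
  also have "A * \<nu> + real (2*k) + real k * (-(2 - \<alpha> - A)) = \<alpha> * real k + A * (real k + \<nu>)"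
    by (simp add: algebra_simps)
  finally show ?thesis by simp
qed

lemma even_power_div_fact_le:
  assumes k: "k \<ge> 1" and D: "D > 0" and L: "L \<ge> 0" and \<nu>: "\<nu> \<ge> 0"
  shows "(2*D)^k * L^(2*k) * (real k + \<nu>)^(2*k) / fact (2*k)
         \<le> (D * L^2 * exp 1 ^ 2 / 2) ^ k * exp (2 * \<nu>)"
proof -
  define x where "x = real k + \<nu>"
  have kp: "real k > 0" using k by simp
  have xp: "x > 0" using kp \<nu> by (simp add: x_def)
  define N where "N = (2*D)^k * L^(2*k) * x^(2*k)"
  have N0: "N \<ge> 0" using D L xp by (simp add: N_def)
  have "N / fact (2*k) \<le> N / (real (2*k) ^ (2*k) / exp (real (2*k)))"
    using fact_ge_power_div_exp[of "2*k"] kp N0 by (intro divide_left_mono mult_pos_pos) auto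
  also have "\<dots> = (D * L^2 * exp 1 ^ 2 / 2 * (x / real k)^2) ^ k"
  proof -
    have e: "exp (real (2*k)) = (exp 1 ^ 2) ^ k"
      by (simp add: exp_of_nat_mult[symmetric] power_mult[symmetric] mult.commute)
    have f4: "(2::real)^(k*2) = 4^k" using power_mult[of "2::real" 2 k] by (simp add: mult.commute)
    have "N / (real (2*k) ^ (2*k) / exp (real (2*k)))
        = (2*D)^k * (L^2)^k * (x^2)^k * (exp 1 ^ 2) ^ k / ((2 * real k)^2)^k"
      unfolding N_def e by (simp add: power_mult[symmetric] mult.commute f4)
    also have "\<dots> = (2*D * L^2 * x^2 * exp 1 ^ 2 / (2 * real k)^2)^k"
    proof -
      have "(4::real)^k = 2^k * 2^k" by (simp add: power_mult_distrib[symmetric])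
      then show ?thesis using kp by (simp add: power_mult_distrib power_divide field_simps)
    qed
    also have "2*D * L^2 * x^2 * exp 1 ^ 2 / (2 * real k)^2 = D * L^2 * exp 1 ^ 2 / 2 * (x / real k)^2"
      using kp by (simp add: field_simps power2_eq_square)
    finally show ?thesis .
  qed
  also have "\<dots> = (D * L^2 * exp 1 ^ 2 / 2)^k * (x / real k)^(2*k)"
    by (simp only: power_mult_distrib power_mult)
  also have "\<dots> \<le> (D * L^2 * exp 1 ^ 2 / 2)^k * exp (2 * \<nu>)"
  proof (rule mult_left_mono)
    have "x / real k = 1 + \<nu> / real k" using kp by (simp add: x_def field_simps)
    also have "\<dots> \<le> exp (\<nu> / real k)" by (rule exp_ge_add_one_self)
    finally have "(x / real k)^(2*k) \<le> exp (\<nu> / real k) ^ (2*k)"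
      using xp kp by (intro power_mono) auto
    also have "\<dots> = exp (2 * \<nu>)"
      using kp by (simp add: exp_of_nat_mult[symmetric])
    finally show "(x / real k)^(2*k) \<le> exp (2 * \<nu>)" .
  qed (use D in simp)
  finally show ?thesis by (simp add: N_def x_def)
qed

lemma lap_bound_Taylor_term_tendsto_0:
  assumes K: "K \<ge> 0" and D: "D > 0" and \<theta>: "\<theta> \<ge> 1" and c: "c \<ge> 1"
    and \<alpha>: "\<alpha> \<ge> 0" and A: "A \<ge> 0" and \<alpha>A: "\<alpha> + A \<le> 2" and L: "L \<ge> 0"
    and h: "\<alpha> + A < 2 \<or> D * L^2 * exp 1 ^ 2 / 2 < 1"
  shows "(\<lambda>k. (2 * real k + 1) * lap_bound K D \<theta> c \<alpha> A k m * L^(2*k) / fact (2*k)) \<longlonglongrightarrow> 0"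
proof -
  define \<nu> where "\<nu> = real m + c"
  define \<theta>' where "\<theta>' = (if m = 0 then \<theta> else 1)"
  define q where "q = D * L^2 * exp 1 ^ 2 / 2"
  define \<delta> where "\<delta> = 2 - \<alpha> - A"
  define C0 where "C0 = K * \<theta>' * exp (2 * \<nu>)"
  have \<nu>: "\<nu> \<ge> 1" using c by (simp add: \<nu>_def)
  have \<theta>': "\<theta>' > 0" using \<theta> by (simp add: \<theta>'_def)
  have q: "q \<ge> 0" using D by (simp add: q_def)
  obtain r where r: "0 < r" "r < 1"
    and ev: "eventually (\<lambda>k. (real k + \<nu>) powr (-\<delta>) * q \<le> r) sequentially"
  proof (cases "\<delta> > 0")
    case True
    have "((\<lambda>k. (real k + \<nu>) powr (-\<delta>) * q) \<longlongrightarrow> 0) at_top"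
      using True by real_asymp
    from order_tendstoD(2)[OF this, of "1/2"]
    show ?thesis by (intro that[of "1/2"]) (auto elim: eventually_mono)
  next
    case False
    then have "\<delta> = 0" "q < 1" using \<alpha>A h by (auto simp: \<delta>_def q_def)
    then show ?thesis using \<nu> by (intro that[of "max q (1/2)"]) auto
  qed
  define g where "g k = C0 * ((2 * real k + 1) * (real k + \<nu>) powr (A * \<nu>) * r^k)" for k
  have "((\<lambda>k. (2 * real k + 1) * (real k + \<nu>) powr (A * \<nu>) * r^k) \<longlongrightarrow> 0) at_top"
    using r by real_asymp
  then have g: "g \<longlonglongrightarrow> 0" unfolding g_def by (rule tendsto_mult_right_zero)
  show ?thesis
  proof (rule Lim_null_comparison[OF _ g])
    show "eventually (\<lambda>k. norm ((2 * real k + 1) * lap_bound K D \<theta> c \<alpha> A k m * L^(2*k) / fact (2*k))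
            \<le> g k) sequentially"
      using ev eventually_ge_at_top[of "1::nat"]
    proof eventually_elim
      case (elim k)
      define x where "x = real k + \<nu>"
      have x: "x > 0" using \<nu> by (simp add: x_def)
      have "(x powr (-\<delta>))^k * q^k \<le> r^k"
        using elim(1) q by (simp add: power_mult_distrib[symmetric] x_def power_mono)
      have "(2 * real k + 1) * lap_bound K D \<theta> c \<alpha> A k m * L^(2*k) / fact (2*k)
            = (2 * real k + 1) * K * \<theta>' * x powr (A * \<nu>) * (x powr (-\<delta>))^k *
              ((2*D)^k * L^(2*k) * x^(2*k) / fact (2*k))"
      proof -
        have "lap_bound K D \<theta> c \<alpha> A k m = K * \<theta>' * (2*D)^k * x powr (\<alpha> * real k + A * (real k + \<nu>))"
          unfolding lap_bound_def \<theta>'_def x_def \<nu>_def by (simp add: algebra_simps)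
        then show ?thesis unfolding powr_affine_exponent_split[OF x] \<delta>_def by (simp add: field_simps)
      qed
      also have "\<dots> \<le> (2 * real k + 1) * K * \<theta>' * x powr (A * \<nu>) * (x powr (-\<delta>))^k * (q^k * exp (2 * \<nu>))"
        using even_power_div_fact_le[OF elim(2) D L, of \<nu>] \<nu> K \<theta>'
        by (intro mult_left_mono) (auto simp: x_def q_def)
      also have "\<dots> = C0 * ((2 * real k + 1) * x powr (A * \<nu>) * ((x powr (-\<delta>))^k * q^k))"
        by (simp add: C0_def field_simps)
      also have "\<dots> \<le> C0 * ((2 * real k + 1) * x powr (A * \<nu>) * r^k)"
        using \<open>(x powr (-\<delta>))^k * q^k \<le> r^k\<close> K \<theta>'
        by (intro mult_left_mono) (auto simp: C0_def)
      finally show ?case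
        using lap_bound_nonneg[OF K D \<theta>, of c \<alpha> A k m] L by (simp add: g_def x_def)
    qed
  qed
qed

lemma Taylor_series_sums_of_even_derivative_bounds:
  fixes f :: "nat \<Rightarrow> real \<Rightarrow> real"
  assumes S: "convex S" "t0 \<in> S" "t \<in> S"
    and f: "\<And>n s. s \<in> S \<Longrightarrow> (f n has_real_derivative f (Suc n) s) (at s within S)"
    and M: "\<And>k s. s \<in> S \<Longrightarrow> \<bar>f (2*k) s\<bar> \<le> M k"
    and lim: "(\<lambda>k. (2 * real k + 1) * M k * \<bar>t - t0\<bar> ^ (2*k) / fact (2*k)) \<longlonglongrightarrow> 0"
  shows "(\<lambda>n. f n t0 / fact n * (t - t0) ^ n) sums f 0 t"
proof -
  define P where "P N = (\<Sum>i<N. f i t0 / fact i * (t - t0) ^ i)" for N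
  define X where "X k = M k * \<bar>t - t0\<bar> ^ (2*k) / fact (2*k)" for k
  have X: "X k \<ge> 0" for k using M[OF S(2), of k] by (simp add: X_def)
  have even_error: "\<bar>P (2*k) - f 0 t\<bar> \<le> 2 * real k * X k" if k: "k \<ge> 1" for k
  proof -
    \<comment> \<open>Taylor's formula of order \<open>2k - 1\<close>, so that the remainder involves \<open>f (2k)\<close>.\<close>
    have "norm (f 0 t - (\<Sum>i\<le>2*k-1. f i t0 * (t - t0) ^ i / fact i))
          \<le> M k * norm (t - t0) ^ Suc (2*k-1) / fact (2*k-1)"
    proof (rule field_Taylor[of S "2*k-1" f "M k" t0 t])
      show "norm (f (Suc (2*k-1)) s) \<le> M k" if "s \<in> S" for s
        using M[OF that, of k] k by simp
    qed (use S f in auto)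
    moreover have "{..2*k-1} = {..<2*k}" "Suc (2*k-1) = 2*k" using k by auto
    moreover have "fact (2*k) = real (2*k) * (fact (2*k - 1) :: real)"
      using k fact_reduce[of "2*k"] by simp
    ultimately show ?thesis
      using k by (simp add: P_def X_def abs_minus_commute field_simps)
  qed
  have error: "\<bar>P N - f 0 t\<bar> \<le> (2 * real (N div 2) + 1) * X (N div 2)" if N: "N \<ge> 2" for N
  proof -
    define k where "k = N div 2"
    have k: "k \<ge> 1" using N by (simp add: k_def)
    show ?thesis
    proof (cases "even N")
      case True
      then show ?thesis using even_error[OF k] X[of k] by (simp add: k_def algebra_simps)
    next
      case False
      then have "N = Suc (2*k)" by (simp add: k_def)
      define a where "a = f (2*k) t0 / fact (2*k) * (t - t0) ^ (2*k)"
      have "P N = P (2*k) + a" using \<open>N = Suc (2*k)\<close> by (simp add: P_def a_def)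
      moreover have "\<bar>a\<bar> \<le> X k"
        using M[OF S(2), of k]
        by (simp add: a_def X_def abs_mult power_abs divide_right_mono mult_right_mono)
      ultimately show ?thesis using even_error[OF k] unfolding k_def[symmetric] by argo
    qed
  qed
  have div2: "filterlim (\<lambda>N::nat. N div 2) sequentially sequentially"
    unfolding filterlim_at_top
  proof
    fix Z :: nat
    show "eventually (\<lambda>N. Z \<le> N div 2) sequentially"
      using eventually_ge_at_top[of "2*Z"] by eventually_elim auto
  qed
  have "(\<lambda>N. (2 * real (N div 2) + 1) * X (N div 2)) \<longlonglongrightarrow> 0"
    using filterlim_compose[OF lim div2] unfolding X_def by (simp add: mult.assoc)
  then have "(\<lambda>N. P N - f 0 t) \<longlonglongrightarrow> 0"
    by (rule Lim_null_comparison[rotated]) (use error in \<open>auto intro: eventually_mono[OF eventually_ge_at_top[of 2]]\<close>)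
  then show ?thesis unfolding sums_def P_def by (rule LIM_zero_cancel)
qed

text \<open>For \<open>A\<^sub>1 = 2 - \<alpha>\<close> the degree constant cannot be enlarged, so the degree of \<open>p\<close> is absorbed
into \<open>\<theta>\<close>, which is admissible as \<open>\<theta> \<le> \<theta>\<^sup>2 = c\<^bsup>\<alpha>+A\<^sub>1\<^esup>\<close> for \<open>c = \<theta>\<close>.\<close>

lemma lap_bound_parameters:
  assumes D: "D > 0" and A: "A \<le> 2 - \<alpha>" and L: "L \<ge> 0"
    and short: "A < 2 - \<alpha> \<or> L < (1 / exp 1) * sqrt (2 / D)"
  obtains D' \<theta> c where "D \<le> D'" "c \<ge> 1" "1 \<le> \<theta>" "\<theta> \<le> c powr (\<alpha> + A)" "W \<le> D' * \<theta>"
    "\<alpha> + A < 2 \<or> D' * L^2 * exp 1 ^ 2 / 2 < 1"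
proof (cases "A < 2 - \<alpha>")
  case True
  then show ?thesis by (intro that[of "max D W" 1 1]) auto
next
  case False
  then have \<alpha>A: "\<alpha> + A = 2" using A by simp
  define \<theta> where "\<theta> = max 1 (W / D)"
  have \<theta>: "1 \<le> \<theta>" by (simp add: \<theta>_def)
  have "L * exp 1 < sqrt (2 / D)" using short False by (simp add: field_simps)
  then have "(L * exp 1)^2 < (sqrt (2 / D))^2" using L by (intro power_strict_mono) auto
  then have "D * L^2 * exp 1 ^ 2 / 2 < 1" using D by (simp add: power_mult_distrib field_simps)
  moreover have "W \<le> D * \<theta>"
    using D mult_left_mono[of "W / D" \<theta> D] by (simp add: \<theta>_def)
  moreover have "\<theta> \<le> \<theta> powr (\<alpha> + A)"
    using \<theta> mult_right_mono[of 1 \<theta> \<theta>] unfolding \<alpha>A by (simp add: power2_eq_square)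
  ultimately show ?thesis using \<theta> by (intro that[of D \<theta> \<theta>]) auto
qed

lemma convex_tint: "convex (tint T)"
  unfolding tint_def is_interval_convex_1[symmetric] is_interval_1
  by (auto intro: le_less_trans[of "ereal _", rotated])

lemma wave_deriv_Taylor_series_sums:
  assumes G: "weighted_graph adj w mu"
    and D: "D > 0" and \<alpha>: "0 \<le> \<alpha>"
    and deg: "\<And>x. x \<noteq> p \<Longrightarrow> wdeg adj w mu x \<le> D * real (gdist adj x p) powr \<alpha>"
    and d1: "\<And>x t. t \<in> tint T \<Longrightarrow> ((\<lambda>s. u s x) has_real_derivative u' t x) (at t within tint T)"
    and d2: "\<And>x t. t \<in> tint T \<Longrightarrow> ((\<lambda>s. u' s x) has_real_derivative u'' t x) (at t within tint T)"
    and wave: "\<And>x t. t \<in> tint T \<Longrightarrow> u'' t x = laplacian adj w mu (u t) x"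
    and C: "C > 0" and A1: "0 \<le> A1" "A1 \<le> 2 - \<alpha>"
    and growth: "\<And>x t. t \<in> tint T \<Longrightarrow> x \<noteq> p \<Longrightarrow>
        \<bar>u t x\<bar> \<le> C * real (gdist adj x p) powr (A1 * real (gdist adj x p))"
    and t0: "t0 \<in> tint T" and t: "t \<in> tint T"
    and short: "A1 < 2 - \<alpha> \<or> \<bar>t - t0\<bar> < (1 / exp 1) * sqrt (2 / D)"
  shows "(\<lambda>n. wave_deriv (laplacian adj w mu) u u' x n t0 / fact n * (t - t0) ^ n) sums u t x"
proof -
  define Du where "Du = wave_deriv (laplacian adj w mu) u u' x"
  define S where "S = closed_segment t0 t"
  have S: "S \<subseteq> tint T" unfolding S_def by (rule closed_segment_subset[OF t0 t convex_tint])
  have "continuous_on S (\<lambda>s. u s p)"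
    using S d1 by (intro DERIV_continuous_on) (auto intro: has_field_derivative_subset)
  then have "bounded ((\<lambda>s. u s p) ` S)"
    unfolding S_def by (intro compact_imp_bounded compact_continuous_image compact_segment)
  then obtain Mp where Mp: "\<And>s. s \<in> S \<Longrightarrow> \<bar>u s p\<bar> \<le> Mp"
    unfolding bounded_iff by auto
  obtain D' \<theta> c where D': "D \<le> D'" and c: "c \<ge> 1" and \<theta>: "1 \<le> \<theta>" "\<theta> \<le> c powr (\<alpha> + A1)"
    and deg_p: "wdeg adj w mu p \<le> D' * \<theta>"
    and decay: "\<alpha> + A1 < 2 \<or> D' * \<bar>t - t0\<bar>^2 * exp 1 ^ 2 / 2 < 1"
    by (rule lap_bound_parameters[OF D A1(2) abs_ge_zero short])
  define K where "K = max C Mp"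
  have K: "K \<ge> 0" using C by (simp add: K_def)
  have bound: "\<bar>Du (2*k) s\<bar> \<le> lap_bound K D' \<theta> c \<alpha> A1 k (gdist adj x p)" if s: "s \<in> S" for k s
  proof -
    have "\<bar>(laplacian adj w mu ^^ k) (u s) x\<bar> \<le> lap_bound K D' \<theta> c \<alpha> A1 k (gdist adj x p)"
      using S s Mp[OF s] growth[of s]
      by (intro abs_laplacian_power_le_lap_bound_of_growth[where C=C, OF G D D' c \<theta> \<alpha> A1(1) deg_p deg])
        (auto simp: K_def)
    then show ?thesis by (simp add: Du_def wave_deriv_def)
  qed
  have lim: "(\<lambda>k. (2 * real k + 1) * lap_bound K D' \<theta> c \<alpha> A1 k (gdist adj x p) *
      \<bar>t - t0\<bar> ^ (2*k) / fact (2*k)) \<longlonglongrightarrow> 0"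
    using D D' A1 by (intro lap_bound_Taylor_term_tendsto_0[OF K _ \<theta>(1) c \<alpha> A1(1) _ abs_ge_zero decay]) auto
  have deriv: "(Du n has_real_derivative Du (Suc n) s) (at s within S)" if "s \<in> S" for n s
    using wave_deriv_has_real_derivative[OF d1 d2 wave, of s x n] that S
    unfolding Du_def by (auto intro: has_field_derivative_subset)
  have "(\<lambda>n. Du n t0 / fact n * (t - t0) ^ n) sums Du 0 t"
    by (rule Taylor_series_sums_of_even_derivative_bounds[OF _ _ _ deriv bound lim]) (auto simp: S_def)
  then show ?thesis by (simp add: Du_def wave_deriv_def)
qed

theorem theorem1p3:
  fixes adj :: "'v \<Rightarrow> 'v \<Rightarrow> bool" and w :: "'v \<Rightarrow> 'v \<Rightarrow> real" and mu :: "'v \<Rightarrow> real"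
    and p :: 'v and D \<alpha> C A1 :: real and T :: ereal
    and u u' u'' :: "real \<Rightarrow> 'v \<Rightarrow> real"
  assumes G: "weighted_graph adj w mu"
    and D: "D > 0" and alpha: "0 \<le> \<alpha>" "\<alpha> \<le> 2"
    and deg: "\<And>x. x \<noteq> p \<Longrightarrow> wdeg adj w mu x \<le> D * real (gdist adj x p) powr \<alpha>"
    and T: "T > 0"
    and d1: "\<And>x t. t \<in> tint T \<Longrightarrow> ((\<lambda>s. u s x) has_real_derivative u' t x) (at t within tint T)"
    and d2: "\<And>x t. t \<in> tint T \<Longrightarrow> ((\<lambda>s. u' s x) has_real_derivative u'' t x) (at t within tint T)"
    and c2: "\<And>x. continuous_on (tint T) (\<lambda>s. u'' s x)"
    and wave: "\<And>x t. t \<in> tint T \<Longrightarrow> u'' t x = laplacian adj w mu (u t) x"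
    and Cpos: "C > 0" and A1: "0 \<le> A1" "A1 \<le> 2 - \<alpha>"
    and growth: "\<And>x t. t \<in> tint T \<Longrightarrow> x \<noteq> p \<Longrightarrow>
        \<bar>u t x\<bar> \<le> C * real (gdist adj x p) powr (A1 * real (gdist adj x p))"
  shows "\<forall>x. \<exists>Du :: nat \<Rightarrow> real \<Rightarrow> real.
           (\<forall>t\<in>tint T. Du 0 t = u t x) \<and>
           (\<forall>n. \<forall>t\<in>tint T. (Du n has_real_derivative Du (Suc n) t) (at t within tint T)) \<and>
           (\<forall>t0\<in>tint T. \<forall>t\<in>tint T.
              (A1 < 2 - \<alpha> \<or> \<bar>t - t0\<bar> < (1 / exp 1) * sqrt (2 / D)) \<longrightarrow>
              (\<lambda>n. Du n t0 / fact n * (t - t0) ^ n) sums u t x)"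
proof -
  define Du where "Du x = wave_deriv (laplacian adj w mu) u u' x" for x
  have "Du x 0 t = u t x" for x t by (simp add: Du_def wave_deriv_def)
  moreover have "(Du x n has_real_derivative Du x (Suc n) t) (at t within tint T)"
    if "t \<in> tint T" for x n t
    unfolding Du_def by (rule wave_deriv_has_real_derivative[OF d1 d2 wave that])
  moreover have "(\<lambda>n. Du x n t0 / fact n * (t - t0) ^ n) sums u t x"
    if "t0 \<in> tint T" "t \<in> tint T" "A1 < 2 - \<alpha> \<or> \<bar>t - t0\<bar> < (1 / exp 1) * sqrt (2 / D)" for x t0 t
    unfolding Du_def
    by (rule wave_deriv_Taylor_series_sums[OF G D alpha(1) deg d1 d2 wave Cpos A1 growth that])
  ultimately show ?thesis by (intro allI exI[of _ "Du _"]) blast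
qed

end
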